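(* Let $n\geq1$ and $\lambda=(\lambda_1,\dots,\lambda_n)\in\mathbb{R}^n$. Then $\sum_{P\in\mathcal{P}_{ord}(\lambda)}(-1)^{|P|}$ equals $(-1)^n$ if $\lambda_r>0$ for all $r\in\{1,\dots,n\}$, and $0$ otherwise.
   Context: An ordered partition of $\{1,\dots,n\}$ is a sequence $P=(I_1,\dots,I_k)$ of nonempty pairwise disjoint subsets with union $\{1,\dots,n\}$, and $|P|=k$. For $J\subset\{1,\dots,n\}$, $s_J(\lambda)=\sum_{i\in J}\lambda_i$. $\mathcal{P}_{ord}(\lambda)$ is the set of ordered partitions $P=(I_1,\dots,I_k)$ such that $s_{I_1}(\lambda)+\dots+s_{I_i}(\lambda)>0$ for all $i\in\{1,\dots,k\}$. *)

theory Defs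
  imports Complex_Main
begin

definition ordered_partition :: "nat \<Rightarrow> nat set list \<Rightarrow> bool" where
  "ordered_partition n P \<longleftrightarrow>
     (\<forall>i < length P. P ! i \<noteq> {}) \<and>
     (\<forall>i < length P. \<forall>j < length P. i \<noteq> j \<longrightarrow> P ! i \<inter> P ! j = {}) \<and>
     \<Union> (set P) = {1..n}"

definition s_J :: "nat set \<Rightarrow> (nat \<Rightarrow> real) \<Rightarrow> real" where
  "s_J J lam = (\<Sum>i\<in>J. lam i)"

definition P_ord :: "nat \<Rightarrow> (nat \<Rightarrow> real) \<Rightarrow> nat set list set" where
  "P_ord n lam = {P. ordered_partition n P \<and>
      (\<forall>i \<in> {1..length P}. (\<Sum>j<i. s_J (P ! j) lam) > 0)}"

end

theory Submission
  imports Defs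
begin

text \<open>
  Removing the last block B of an ordered partition of S with positive prefix sums leaves such a
  partition of S - B, and the total sum over S must be positive. Hence the signed count f(S)
  satisfies f({}) = 1, f(S) = 0 if s_S \<le> 0, and f(S) = - \<Sum> f(S - B) over nonempty B \<subseteq> S otherwise.
  The sign g(S) = (-1)^|S| if all weights on S are positive (0 otherwise) obeys the same recursion:
  if s_S > 0 then some weight is positive, so the sum of g over all subsets of S is the
  alternating sum over the subsets of the nonempty set of positive indices, which vanishes.
\<close>

definition ordered_partition_of :: "'a set \<Rightarrow> 'a set list \<Rightarrow> bool" where
  "ordered_partition_of S P \<longleftrightarrow>
     (\<forall>i < length P. P ! i \<noteq> {}) \<and>
     (\<forall>i < length P. \<forall>j < length P. i \<noteq> j \<longrightarrow> P ! i \<inter> P ! j = {}) \<and>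
     \<Union> (set P) = S"

definition prefix_sums_pos :: "('a \<Rightarrow> real) \<Rightarrow> 'a set list \<Rightarrow> bool" where
  "prefix_sums_pos lam P \<longleftrightarrow> (\<forall>i \<in> {1..length P}. (\<Sum>j<i. sum lam (P ! j)) > 0)"

definition pos_ordered_partitions :: "'a set \<Rightarrow> ('a \<Rightarrow> real) \<Rightarrow> 'a set list set" where
  "pos_ordered_partitions S lam = {P. ordered_partition_of S P \<and> prefix_sums_pos lam P}"

definition all_pos_sign :: "'a set \<Rightarrow> ('a \<Rightarrow> real) \<Rightarrow> int" where
  "all_pos_sign S lam = (if \<forall>r\<in>S. lam r > 0 then (-1) ^ card S else 0)"

lemma P_ord_eq_pos_ordered_partitions: "P_ord n lam = pos_ordered_partitions {1..n} lam"
  unfolding P_ord_def pos_ordered_partitions_def ordered_partition_def ordered_partition_of_def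
    prefix_sums_pos_def s_J_def ..

lemma ordered_partition_of_Nil [simp]: "ordered_partition_of S [] \<longleftrightarrow> S = {}"
  by (auto simp: ordered_partition_of_def)

lemma ordered_partition_of_empty_iff [simp]: "ordered_partition_of {} P \<longleftrightarrow> P = []"
  by (cases P) (auto simp: ordered_partition_of_def)

lemma ordered_partition_of_snoc:
  "ordered_partition_of S (P @ [B]) \<longleftrightarrow> B \<noteq> {} \<and> B \<subseteq> S \<and> ordered_partition_of (S - B) P"
proof -
  have nonempty: "(\<forall>i < length (P @ [B]). (P @ [B]) ! i \<noteq> {}) \<longleftrightarrow>
      B \<noteq> {} \<and> (\<forall>i < length P. P ! i \<noteq> {})"
    by (auto simp: nth_append less_Suc_eq)
  have "(\<forall>i < length (P @ [B]). \<forall>j < length (P @ [B]). i \<noteq> j \<longrightarrow> (P @ [B]) ! i \<inter> (P @ [B]) ! j = {})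
      \<longleftrightarrow> (\<forall>i < length P. \<forall>j < length P. i \<noteq> j \<longrightarrow> P ! i \<inter> P ! j = {}) \<and>
          (\<forall>i < length P. P ! i \<inter> B = {})"
  proof
    assume blocks: "\<forall>i < length (P @ [B]). \<forall>j < length (P @ [B]). i \<noteq> j \<longrightarrow> (P @ [B]) ! i \<inter> (P @ [B]) ! j = {}"
    show "(\<forall>i < length P. \<forall>j < length P. i \<noteq> j \<longrightarrow> P ! i \<inter> P ! j = {}) \<and> (\<forall>i < length P. P ! i \<inter> B = {})"
    proof (intro conjI allI impI)
      show "P ! i \<inter> P ! j = {}" if "i < length P" "j < length P" "i \<noteq> j" for i j
        using blocks[rule_format, of i j] that by (simp add: nth_append)
      show "P ! i \<inter> B = {}" if "i < length P" for i
        using blocks[rule_format, of i "length P"] that by (simp add: nth_append)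
    qed
  qed (auto simp: nth_append less_Suc_eq Int_commute)
  also have "(\<forall>i < length P. P ! i \<inter> B = {}) \<longleftrightarrow> \<Union> (set P) \<inter> B = {}"
    unfolding set_conv_nth by blast
  finally show ?thesis
    unfolding ordered_partition_of_def nonempty by auto
qed

lemma distinct_if_ordered_partition_of:
  assumes "ordered_partition_of S P"
  shows "distinct P"
  unfolding distinct_conv_nth
proof (intro allI impI)
  fix i j assume "i < length P" "j < length P" "i \<noteq> j"
  with assms have "P ! i \<inter> P ! j = {}" "P ! i \<noteq> {}"
    unfolding ordered_partition_of_def by auto
  then show "P ! i \<noteq> P ! j" by auto
qed

lemma finite_ordered_partitions_of:
  assumes "finite S"
  shows "finite {P. ordered_partition_of S P}"
proof (rule finite_subset)
  show "{P. ordered_partition_of S P} \<subseteq> {P. set P \<subseteq> Pow S \<and> distinct P}"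
    by (auto simp: ordered_partition_of_def distinct_if_ordered_partition_of)
  show "finite {P. set P \<subseteq> Pow S \<and> distinct P}"
    using assms by (simp add: finite_subset_distinct)
qed

lemma sum_blocks_ordered_partition_of:
  assumes "ordered_partition_of S P" "finite S"
  shows "(\<Sum>j<length P. sum lam (P ! j)) = sum lam S"
proof -
  have S: "S = (\<Union>j<length P. P ! j)"
    using assms(1) unfolding ordered_partition_of_def set_conv_nth by auto
  have "finite (P ! j)" if "j < length P" for j
    using assms that S by (metis UN_I finite_subset lessThan_iff subsetI)
  then show ?thesis
    using assms(1) unfolding S ordered_partition_of_def
    by (subst sum.UNION_disjoint) auto
qed

lemma prefix_sums_pos_snoc:
  "prefix_sums_pos lam (P @ [B]) \<longleftrightarrow>
     prefix_sums_pos lam P \<and> (\<Sum>j<length P. sum lam (P ! j)) + sum lam B > 0"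
proof -
  have prefix: "(\<Sum>j<i. sum lam ((P @ [B]) ! j)) = (\<Sum>j<i. sum lam (P ! j))" if "i \<in> {1..length P}" for i
    using that by (intro sum.cong) (auto simp: nth_append)
  have "{1..length (P @ [B])} = insert (Suc (length P)) {1..length P}"
    by auto
  then show ?thesis
    unfolding prefix_sums_pos_def using prefix by (auto simp: nth_append)
qed

lemma snoc_in_pos_ordered_partitions_iff:
  assumes "finite S"
  shows "P @ [B] \<in> pos_ordered_partitions S lam \<longleftrightarrow>
    B \<noteq> {} \<and> B \<subseteq> S \<and> P \<in> pos_ordered_partitions (S - B) lam \<and> sum lam S > 0"
proof -
  have "(\<Sum>j<length P. sum lam (P ! j)) + sum lam B = sum lam S"
    if "B \<subseteq> S" "ordered_partition_of (S - B) P"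
    using that assms sum_blocks_ordered_partition_of[of "S - B" P lam]
    by (simp add: sum_diff finite_subset)
  then show ?thesis
    unfolding pos_ordered_partitions_def
    by (auto simp: ordered_partition_of_snoc prefix_sums_pos_snoc)
qed

lemma pos_ordered_partitions_empty [simp]: "pos_ordered_partitions {} lam = {[]}"
  by (auto simp: pos_ordered_partitions_def prefix_sums_pos_def)

lemma pos_ordered_partitions_eq_snoc_image:
  assumes "finite S" "S \<noteq> {}"
  shows "pos_ordered_partitions S lam = (\<lambda>(B, P). P @ [B]) `
    (SIGMA B:{B. B \<noteq> {} \<and> B \<subseteq> S \<and> sum lam S > 0}. pos_ordered_partitions (S - B) lam)"
proof -
  have "P \<noteq> []" if "P \<in> pos_ordered_partitions S lam" for P
    using that assms(2) by (auto simp: pos_ordered_partitions_def)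
  then show ?thesis
    using snoc_in_pos_ordered_partitions_iff[OF assms(1)]
    by (auto simp: image_iff) (metis rev_exhaust)
qed

lemma sum_Pow_neg_one_power_card:
  assumes "finite S"
  shows "(\<Sum>A\<in>Pow S. (-1::'b::comm_ring_1) ^ card A) = (if S = {} then 1 else 0)"
proof -
  have "(\<Prod>x\<in>S. (1::'b) - 1) = (\<Sum>A\<in>Pow S. (-1) ^ card A * (\<Prod>x\<in>A. 1) * (\<Prod>x\<in>S - A. 1))"
    by (rule prod_diff_conv_sum[OF assms])
  then show ?thesis
    using assms by (simp add: power_0_left card_eq_0_iff)
qed

lemma sum_Pow_all_pos_sign:
  assumes "finite S" "\<exists>r\<in>S. lam r > 0"
  shows "(\<Sum>A\<in>Pow S. all_pos_sign A lam) = 0"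
proof -
  let ?Pos = "{r\<in>S. lam r > 0}"
  have "(\<Sum>A\<in>Pow S. all_pos_sign A lam) = (\<Sum>A\<in>Pow ?Pos. all_pos_sign A lam)"
    using assms(1) by (intro sum.mono_neutral_right) (auto simp: all_pos_sign_def)
  also have "\<dots> = (\<Sum>A\<in>Pow ?Pos. (-1) ^ card A)"
    by (intro sum.cong) (auto simp: all_pos_sign_def)
  also have "\<dots> = 0"
    using assms by (subst sum_Pow_neg_one_power_card) auto
  finally show ?thesis .
qed

lemma sum_nonempty_subsets_eq_sum_proper_subsets:
  fixes f :: "'a set \<Rightarrow> 'b::ab_group_add"
  assumes "finite S"
  shows "(\<Sum>B | B \<noteq> {} \<and> B \<subseteq> S. f (S - B)) = (\<Sum>A\<in>Pow S. f A) - f S"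
proof -
  have "(\<Sum>B | B \<noteq> {} \<and> B \<subseteq> S. f (S - B)) = (\<Sum>A\<in>Pow S - {S}. f A)"
    by (rule sum.reindex_bij_witness[of _ "\<lambda>A. S - A" "\<lambda>A. S - A"]) auto
  also have "\<dots> = (\<Sum>A\<in>Pow S. f A) - f S"
    using assms by (subst sum_diff1) auto
  finally show ?thesis .
qed

lemma all_pos_sign_recursion:
  assumes "finite S" "S \<noteq> {}"
  shows "all_pos_sign S lam =
    (if sum lam S > 0 then - (\<Sum>B | B \<noteq> {} \<and> B \<subseteq> S. all_pos_sign (S - B) lam) else 0)"
proof (cases "sum lam S > 0")
  case True
  then have "\<exists>r\<in>S. lam r > 0"
    by (meson not_le sum_nonpos)
  then have "(\<Sum>B | B \<noteq> {} \<and> B \<subseteq> S. all_pos_sign (S - B) lam) = - all_pos_sign S lam"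
    using assms(1) sum_Pow_all_pos_sign[OF assms(1)]
    by (subst sum_nonempty_subsets_eq_sum_proper_subsets) simp_all
  then show ?thesis
    using True by simp
next
  case False
  then have "\<not> (\<forall>r\<in>S. lam r > 0)"
    using assms sum_pos by metis
  then show ?thesis
    using False by (simp add: all_pos_sign_def)
qed

lemma signed_count_recursion:
  assumes "finite S" "S \<noteq> {}"
  shows "(\<Sum>P\<in>pos_ordered_partitions S lam. (-1::int) ^ length P) =
    (if sum lam S > 0
     then - (\<Sum>B | B \<noteq> {} \<and> B \<subseteq> S. \<Sum>P\<in>pos_ordered_partitions (S - B) lam. (-1) ^ length P)
     else 0)"
proof -
  define Bs where "Bs = {B. B \<noteq> {} \<and> B \<subseteq> S \<and> sum lam S > 0}"
  have fin: "finite (pos_ordered_partitions A lam)" if "A \<subseteq> S" for A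
    using finite_ordered_partitions_of[of A] assms(1) that
    by (auto simp: pos_ordered_partitions_def intro: finite_subset)
  have "(\<Sum>P\<in>pos_ordered_partitions S lam. (-1::int) ^ length P) =
      (\<Sum>(B, P)\<in>(SIGMA B:Bs. pos_ordered_partitions (S - B) lam). (-1) ^ length (P @ [B]))"
    unfolding pos_ordered_partitions_eq_snoc_image[OF assms] Bs_def
    by (subst sum.reindex) (auto simp: inj_on_def case_prod_unfold)
  also have "\<dots> = (\<Sum>B\<in>Bs. \<Sum>P\<in>pos_ordered_partitions (S - B) lam. - ((-1) ^ length P))"
    using assms(1) fin by (subst sum.Sigma) (auto simp: Bs_def)
  also have "\<dots> = (if sum lam S > 0
     then - (\<Sum>B | B \<noteq> {} \<and> B \<subseteq> S. \<Sum>P\<in>pos_ordered_partitions (S - B) lam. (-1) ^ length P)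
     else 0)"
    by (simp add: Bs_def sum_negf)
  finally show ?thesis .
qed

lemma signed_count_eq_all_pos_sign:
  assumes "finite S"
  shows "(\<Sum>P\<in>pos_ordered_partitions S lam. (-1::int) ^ length P) = all_pos_sign S lam"
  using assms
proof (induction S rule: finite_psubset_induct)
  case (psubset S)
  show ?case
  proof (cases "S = {}")
    case True
    then show ?thesis by (simp add: all_pos_sign_def)
  next
    case False
    have "(\<Sum>B | B \<noteq> {} \<and> B \<subseteq> S. \<Sum>P\<in>pos_ordered_partitions (S - B) lam. (-1::int) ^ length P) =
        (\<Sum>B | B \<noteq> {} \<and> B \<subseteq> S. all_pos_sign (S - B) lam)"
      using psubset.IH by (intro sum.cong) auto
    then show ?thesis
      using psubset.hyps(1) False by (simp add: signed_count_recursion all_pos_sign_recursion)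
  qed
qed

theorem mainTheorem5:
  fixes n :: nat and lam :: "nat \<Rightarrow> real"
  assumes "n \<ge> 1"
  shows "(\<Sum>P\<in>P_ord n lam. (-1::int) ^ length P) =
           (if (\<forall>r\<in>{1..n}. lam r > 0) then (-1) ^ n else 0)"
  using signed_count_eq_all_pos_sign[of "{1..n}" lam]
  by (simp add: P_ord_eq_pos_ordered_partitions all_pos_sign_def)

end
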